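(* Let $n>1$, $a\in\mathcal{T}_n$, and consider the semigroup $(\mathcal{T}_n,*_a)$. Let $x\in\mathcal{T}_n$. If $\operatorname{rank}(x)\le\operatorname{rank}(a)$, $|\operatorname{ran}(x)\cap M|\le1$ for every block $M$ of $\rho_a$, and $B\cap\operatorname{ran}(a)\ne\varnothing$ for every block $B$ of $\rho_x$, then $$H_x=\{y\in\mathcal{T}_n : \rho_y=\rho_x,\ \operatorname{ran}(y)=\operatorname{ran}(x),\ |\operatorname{ran}(y)\cap M|\le1 \ \forall \text{ blocks } M \text{ of } \rho_a,\ B\cap\operatorname{ran}(a)\ne\varnothing\ \forall \text{ blocks } B \text{ of } \rho_y\}.$$ Otherwise $H_x=\{x\}$.
   Context: $\mathcal{T}_n$ is the set of all maps $N\to N$, $N=\{1,\dots,n\}$. Maps are composed from left to right: $(xy)(i)=y(x(i))$. For fixed $a\in\mathcal{T}_n$, $x*_a y:=xay$; $(\mathcal{T}_n,*_a)$ is a semigroup. $\operatorname{ran}(x)$ is the image of $x$, $\operatorname{rank}(x)=|\operatorname{ran}(x)|$, and $\rho_x$ is the partition of $N$ into the nonempty fibres of $x$ ($i,j$ in the same block iff $x(i)=x(j)$). Green's relations in a semigroup $S$: with $S^1$ the semigroup $S$ with an identity adjoined, $x\mathcal{L}y$ iff $S^1x=S^1y$, $x\mathcal{R}y$ iff $xS^1=yS^1$, $\mathcal{H}=\mathcal{L}\cap\mathcal{R}$; $H_x$ denotes the $\mathcal{H}$-class of $x$ in $(\mathcal{T}_n,*_a)$. *)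

theory Defs
  imports Main
begin

definition Tn :: "nat \<Rightarrow> (nat \<Rightarrow> nat) set" where
  "Tn n = {f. (\<forall>i\<in>{1..n}. f i \<in> {1..n}) \<and> (\<forall>i. i \<notin> {1..n} \<longrightarrow> f i = 0)}"

text \<open>Left-to-right composition: (x y)(i) = y (x i); the sandwich product x *_a y = x a y.\<close>
definition sandwich :: "(nat \<Rightarrow> nat) \<Rightarrow> (nat \<Rightarrow> nat) \<Rightarrow> (nat \<Rightarrow> nat) \<Rightarrow> (nat \<Rightarrow> nat)" where
  "sandwich a x y = y \<circ> a \<circ> x"

definition ranT :: "nat \<Rightarrow> (nat \<Rightarrow> nat) \<Rightarrow> nat set" where
  "ranT n x = x ` {1..n}"

definition rankT :: "nat \<Rightarrow> (nat \<Rightarrow> nat) \<Rightarrow> nat" where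
  "rankT n x = card (ranT n x)"

definition kerblocks :: "nat \<Rightarrow> (nat \<Rightarrow> nat) \<Rightarrow> nat set set" where
  "kerblocks n x = {{i \<in> {1..n}. x i = x j} | j. j \<in> {1..n}}"

text \<open>Green's relations in the semigroup (T_n, *_a), using S^1.\<close>
definition greenL :: "nat \<Rightarrow> (nat \<Rightarrow> nat) \<Rightarrow> (nat \<Rightarrow> nat) \<Rightarrow> (nat \<Rightarrow> nat) \<Rightarrow> bool" where
  "greenL n a x y \<longleftrightarrow>
     insert x {sandwich a s x | s. s \<in> Tn n} = insert y {sandwich a s y | s. s \<in> Tn n}"

definition greenR :: "nat \<Rightarrow> (nat \<Rightarrow> nat) \<Rightarrow> (nat \<Rightarrow> nat) \<Rightarrow> (nat \<Rightarrow> nat) \<Rightarrow> bool" where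
  "greenR n a x y \<longleftrightarrow>
     insert x {sandwich a x s | s. s \<in> Tn n} = insert y {sandwich a y s | s. s \<in> Tn n}"

definition Hclass :: "nat \<Rightarrow> (nat \<Rightarrow> nat) \<Rightarrow> (nat \<Rightarrow> nat) \<Rightarrow> (nat \<Rightarrow> nat) set" where
  "Hclass n a x = {y \<in> Tn n. greenL n a x y \<and> greenR n a x y}"

end

theory Submission
  imports Defs
begin

text \<open>In the paper's left-to-right notation, \<open>y \<in> H\<^sub>x\<close> with \<open>y \<noteq> x\<close> means that
  \<open>x \<in> T a y\<close>, \<open>y \<in> T a x\<close>, \<open>x \<in> y a T\<close> and \<open>y \<in> x a T\<close>. These give the chains
  \<open>ran x \<subseteq> ran(ay) \<subseteq> ran y \<subseteq> ran(ax) \<subseteq> ran x\<close> and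
  \<open>ker(xa) \<subseteq> ker y \<subseteq> ker(ya) \<subseteq> ker x \<subseteq> ker(xa)\<close>, so all these ranges and kernels coincide.
  Hence a nontrivial \<open>H\<^sub>x\<close> forces \<open>ker(xa) = ker x\<close> and \<open>ran(ax) = ran x\<close>, which are exactly the
  block conditions of the theorem (and they imply the rank condition); conversely, if \<open>x\<close>
  satisfies them, \<open>H\<^sub>x\<close> consists of the maps that satisfy them too and have the kernel and
  range of \<open>x\<close>.\<close>

definition kerT :: "nat \<Rightarrow> (nat \<Rightarrow> nat) \<Rightarrow> (nat \<times> nat) set" where
  "kerT n f = {(i, j) \<in> {1..n} \<times> {1..n}. f i = f j}"

text \<open>In the paper's notation: \<open>ker(xa) = ker x\<close> and \<open>ran(ax) = ran x\<close>.\<close>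
definition sandwich_stable :: "nat \<Rightarrow> (nat \<Rightarrow> nat) \<Rightarrow> (nat \<Rightarrow> nat) \<Rightarrow> bool" where
  "sandwich_stable n a x \<longleftrightarrow> kerT n (a \<circ> x) = kerT n x \<and> x ` ranT n a = ranT n x"

lemma TnI:
  "(\<And>i. i \<in> {1..n} \<Longrightarrow> f i \<in> {1..n}) \<Longrightarrow> (\<And>i. i \<notin> {1..n} \<Longrightarrow> f i = 0) \<Longrightarrow> f \<in> Tn n"
  by (simp add: Tn_def)

lemma Tn_into: "f \<in> Tn n \<Longrightarrow> i \<in> {1..n} \<Longrightarrow> f i \<in> {1..n}"
  by (auto simp: Tn_def)

lemma Tn_outside: "f \<in> Tn n \<Longrightarrow> i \<notin> {1..n} \<Longrightarrow> f i = 0"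
  by (auto simp: Tn_def)

lemma Tn_zero: "f \<in> Tn n \<Longrightarrow> f 0 = 0"
  by (simp add: Tn_outside)

lemma Tn_comp: "f \<in> Tn n \<Longrightarrow> g \<in> Tn n \<Longrightarrow> f \<circ> g \<in> Tn n"
  by (auto simp: Tn_def)

lemma ranT_subset: "f \<in> Tn n \<Longrightarrow> ranT n f \<subseteq> {1..n}"
  unfolding ranT_def using Tn_into by blast

lemma ranT_comp: "ranT n (g \<circ> f) = g ` ranT n f"
  by (simp add: ranT_def image_comp)

lemma image_ranT_subset: "a \<in> Tn n \<Longrightarrow> f ` ranT n a \<subseteq> ranT n f"
  using ranT_subset by (fastforce simp: ranT_def)

lemma mem_kerT: "(i, j) \<in> kerT n f \<longleftrightarrow> i \<in> {1..n} \<and> j \<in> {1..n} \<and> f i = f j"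
  by (simp add: kerT_def)

lemma kerT_subset_kerT_comp: "kerT n f \<subseteq> kerT n (g \<circ> f)"
  by (auto simp: kerT_def)

lemma kerblocks_eq_image: "kerblocks n f = (\<lambda>j. {i \<in> {1..n}. f i = f j}) ` {1..n}"
  by (auto simp: kerblocks_def)

lemma kerblockI: "j \<in> {1..n} \<Longrightarrow> {i \<in> {1..n}. f i = f j} \<in> kerblocks n f"
  by (simp add: kerblocks_eq_image)

lemma kerblockE:
  assumes "M \<in> kerblocks n f"
  obtains j where "j \<in> {1..n}" "M = {i \<in> {1..n}. f i = f j}"
  using assms by (auto simp: kerblocks_eq_image)

lemma Tn_factors_through_ran_iff:
  assumes "h \<in> Tn n" "x \<in> Tn n"
  shows "(\<exists>s\<in>Tn n. x = h \<circ> s) \<longleftrightarrow> ranT n x \<subseteq> ranT n h"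
proof
  assume "\<exists>s\<in>Tn n. x = h \<circ> s"
  then show "ranT n x \<subseteq> ranT n h"
    unfolding ranT_def using Tn_into by fastforce
next
  assume ran: "ranT n x \<subseteq> ranT n h"
  define s where "s i = (if i \<in> {1..n} then inv_into {1..n} h (x i) else 0)" for i
  have x_in: "x i \<in> h ` {1..n}" if "i \<in> {1..n}" for i
    using ran that by (auto simp: ranT_def)
  have "s \<in> Tn n"
    by (rule TnI) (simp_all only: s_def if_True if_False inv_into_into[OF x_in])
  moreover have "x = h \<circ> s"
  proof
    fix i
    show "x i = (h \<circ> s) i"
    proof (cases "i \<in> {1..n}")
      case True
      then show ?thesis
        using f_inv_into_f[OF x_in[OF True]] by (simp add: s_def)
    next
      case False
      then have "s i = 0"
        unfolding s_def by (rule if_not_P)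
      then show ?thesis
        by (simp add: Tn_outside[OF assms(2) False] Tn_zero[OF assms(1)])
    qed
  qed
  ultimately show "\<exists>s\<in>Tn n. x = h \<circ> s" by blast
qed

lemma Tn_factors_through_ker_iff:
  assumes "g \<in> Tn n" "x \<in> Tn n"
  shows "(\<exists>s\<in>Tn n. x = s \<circ> g) \<longleftrightarrow> kerT n g \<subseteq> kerT n x"
proof
  assume "\<exists>s\<in>Tn n. x = s \<circ> g"
  then show "kerT n g \<subseteq> kerT n x"
    by (auto simp: kerT_def)
next
  assume ker: "kerT n g \<subseteq> kerT n x"
  define s where "s k = (if k \<in> g ` {1..n} then x (inv_into {1..n} g k)
      else if k \<in> {1..n} then k else 0)" for k
  have ran_g: "g ` {1..n} \<subseteq> {1..n}"
    using Tn_into[OF assms(1)] by blast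
  have s_g: "s (g i) = x i" if "i \<in> {1..n}" for i
  proof -
    have "g i \<in> g ` {1..n}" using that by blast
    then have "(inv_into {1..n} g (g i), i) \<in> kerT n g"
      using that inv_into_into[of "g i" g "{1..n}"] f_inv_into_f[of "g i" g "{1..n}"]
      by (simp add: kerT_def)
    then show ?thesis
      using ker \<open>g i \<in> g ` {1..n}\<close> by (auto simp: s_def kerT_def)
  qed
  have "s \<in> Tn n"
  proof (rule TnI)
    fix k assume k: "k \<in> {1..n}"
    show "s k \<in> {1..n}"
    proof (cases "k \<in> g ` {1..n}")
      case True
      then show ?thesis
        using Tn_into[OF assms(2) inv_into_into[OF True]] by (simp add: s_def)
    qed (use k in \<open>simp add: s_def\<close>)
  next
    fix k assume "k \<notin> {1..n}"
    then show "s k = 0"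
      using ran_g by (auto simp: s_def)
  qed
  moreover have "x = s \<circ> g"
  proof
    fix i
    show "x i = (s \<circ> g) i"
    proof (cases "i \<in> {1..n}")
      case False
      have "0 \<notin> g ` {1..n}" using ran_g by auto
      then show ?thesis
        using False by (simp add: s_def Tn_outside[OF assms(1)] Tn_outside[OF assms(2)])
    qed (simp add: s_g)
  qed
  ultimately show "\<exists>s\<in>Tn n. x = s \<circ> g" by blast
qed

lemma sandwich_assoc: "sandwich a (sandwich a x y) z = sandwich a x (sandwich a y z)"
  by (simp add: sandwich_def comp_assoc)

lemma sandwich_in_Tn: "a \<in> Tn n \<Longrightarrow> x \<in> Tn n \<Longrightarrow> y \<in> Tn n \<Longrightarrow> sandwich a x y \<in> Tn n"
  by (simp add: sandwich_def Tn_comp)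

text \<open>With \<open>I v\<close> the principal ideal \<open>S v\<close> (resp. \<open>v S\<close>), \<open>insert v (I v)\<close> is \<open>S\<^sup>1 v\<close> (resp. \<open>v S\<^sup>1\<close>).\<close>
lemma insert_eq_insert_iff_mutual_mem:
  assumes "\<And>u v. u \<in> I v \<Longrightarrow> I u \<subseteq> I v"
  shows "insert x (I x) = insert y (I y) \<longleftrightarrow> x = y \<or> (x \<in> I y \<and> y \<in> I x)"
proof
  assume eq: "insert x (I x) = insert y (I y)"
  show "x = y \<or> (x \<in> I y \<and> y \<in> I x)"
  proof (cases "x = y")
    case False
    then show ?thesis
      using eq by (metis insertCI insertE)
  qed simp
next
  assume "x = y \<or> (x \<in> I y \<and> y \<in> I x)"
  then show "insert x (I x) = insert y (I y)"
  proof
    assume mem: "x \<in> I y \<and> y \<in> I x"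
    then have "I x = I y"
      using assms by (simp add: subset_antisym)
    with mem show ?thesis
      by (simp add: insert_absorb)
  qed simp
qed

lemma greenL_iff:
  assumes "a \<in> Tn n" "x \<in> Tn n" "y \<in> Tn n"
  shows "greenL n a x y \<longleftrightarrow> x = y \<or> (ranT n x \<subseteq> y ` ranT n a \<and> ranT n y \<subseteq> x ` ranT n a)"
proof -
  let ?I = "\<lambda>v. {sandwich a s v | s. s \<in> Tn n}"
  have closed: "?I u \<subseteq> ?I v" if u: "u \<in> ?I v" for u v
  proof
    fix w assume "w \<in> ?I u"
    then obtain t where t: "t \<in> Tn n" "w = sandwich a t u" by blast
    obtain s where s: "s \<in> Tn n" "u = sandwich a s v" using u by blast
    have "w = sandwich a (sandwich a t s) v"
      by (simp add: t(2) s(2) sandwich_assoc)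
    then show "w \<in> ?I v"
      using sandwich_in_Tn[OF assms(1) t(1) s(1)] by blast
  qed
  have mem: "u \<in> ?I v \<longleftrightarrow> ranT n u \<subseteq> v ` ranT n a" if "u \<in> Tn n" "v \<in> Tn n" for u v
  proof -
    have "u \<in> ?I v \<longleftrightarrow> (\<exists>s\<in>Tn n. u = (v \<circ> a) \<circ> s)"
      unfolding sandwich_def by blast
    also have "\<dots> \<longleftrightarrow> ranT n u \<subseteq> ranT n (v \<circ> a)"
      by (rule Tn_factors_through_ran_iff[OF Tn_comp[OF that(2) assms(1)] that(1)])
    finally show ?thesis
      by (simp only: ranT_comp)
  qed
  have "greenL n a x y \<longleftrightarrow> x = y \<or> (x \<in> ?I y \<and> y \<in> ?I x)"
    unfolding greenL_def by (rule insert_eq_insert_iff_mutual_mem) (rule closed)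
  then show ?thesis
    by (simp only: mem[OF assms(2,3)] mem[OF assms(3,2)])
qed

lemma greenR_iff:
  assumes "a \<in> Tn n" "x \<in> Tn n" "y \<in> Tn n"
  shows "greenR n a x y \<longleftrightarrow> x = y \<or> (kerT n (a \<circ> y) \<subseteq> kerT n x \<and> kerT n (a \<circ> x) \<subseteq> kerT n y)"
proof -
  let ?I = "\<lambda>v. {sandwich a v s | s. s \<in> Tn n}"
  have closed: "?I u \<subseteq> ?I v" if u: "u \<in> ?I v" for u v
  proof
    fix w assume "w \<in> ?I u"
    then obtain t where t: "t \<in> Tn n" "w = sandwich a u t" by blast
    obtain s where s: "s \<in> Tn n" "u = sandwich a v s" using u by blast
    have "w = sandwich a v (sandwich a s t)"
      by (simp add: t(2) s(2) sandwich_assoc)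
    then show "w \<in> ?I v"
      using sandwich_in_Tn[OF assms(1) s(1) t(1)] by blast
  qed
  have mem: "u \<in> ?I v \<longleftrightarrow> kerT n (a \<circ> v) \<subseteq> kerT n u" if "u \<in> Tn n" "v \<in> Tn n" for u v
  proof -
    have "u \<in> ?I v \<longleftrightarrow> (\<exists>s\<in>Tn n. u = s \<circ> (a \<circ> v))"
      unfolding sandwich_def comp_assoc by blast
    also have "\<dots> \<longleftrightarrow> kerT n (a \<circ> v) \<subseteq> kerT n u"
      by (rule Tn_factors_through_ker_iff[OF Tn_comp[OF assms(1) that(2)] that(1)])
    finally show ?thesis .
  qed
  have "greenR n a x y \<longleftrightarrow> x = y \<or> (x \<in> ?I y \<and> y \<in> ?I x)"
    unfolding greenR_def by (rule insert_eq_insert_iff_mutual_mem) (rule closed)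
  then show ?thesis
    by (simp only: mem[OF assms(2,3)] mem[OF assms(3,2)])
qed

lemma Hclass_iff:
  assumes "a \<in> Tn n" "x \<in> Tn n"
  shows "y \<in> Hclass n a x \<longleftrightarrow> y \<in> Tn n \<and> (y = x \<or>
    ranT n x \<subseteq> y ` ranT n a \<and> ranT n y \<subseteq> x ` ranT n a \<and>
    kerT n (a \<circ> x) \<subseteq> kerT n y \<and> kerT n (a \<circ> y) \<subseteq> kerT n x)"
  using greenL_iff[OF assms] greenR_iff[OF assms] by (auto simp: Hclass_def)

lemma Hclass_nontrivial_member:
  assumes "a \<in> Tn n" "x \<in> Tn n" "y \<in> Hclass n a x" "y \<noteq> x"
  shows "sandwich_stable n a x" "sandwich_stable n a y"
    and "kerT n y = kerT n x" "ranT n y = ranT n x"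
proof -
  have y: "y \<in> Tn n"
    and ran: "ranT n x \<subseteq> y ` ranT n a" "ranT n y \<subseteq> x ` ranT n a"
    and ker: "kerT n (a \<circ> x) \<subseteq> kerT n y" "kerT n (a \<circ> y) \<subseteq> kerT n x"
    using assms(3,4) Hclass_iff[OF assms(1,2)] by auto
  have "y ` ranT n a \<subseteq> ranT n y" "x ` ranT n a \<subseteq> ranT n x"
    using image_ranT_subset[OF assms(1)] by auto
  with ran have "y ` ranT n a = ranT n x" "ranT n y = ranT n x" "x ` ranT n a = ranT n x"
    by auto
  moreover have "kerT n y \<subseteq> kerT n (a \<circ> y)" "kerT n x \<subseteq> kerT n (a \<circ> x)"
    by (rule kerT_subset_kerT_comp)+
  with ker have "kerT n (a \<circ> y) = kerT n x" "kerT n y = kerT n x" "kerT n (a \<circ> x) = kerT n x"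
    by auto
  ultimately show "sandwich_stable n a x" "sandwich_stable n a y"
    and "kerT n y = kerT n x" "ranT n y = ranT n x"
    by (auto simp: sandwich_stable_def)
qed

lemma sandwich_stable_in_Hclass:
  assumes "a \<in> Tn n" "x \<in> Tn n" "y \<in> Tn n"
    and "sandwich_stable n a x" "sandwich_stable n a y"
    and "kerT n y = kerT n x" "ranT n y = ranT n x"
  shows "y \<in> Hclass n a x"
  using assms Hclass_iff[OF assms(1,2)] by (simp add: sandwich_stable_def)

lemma Hclass_eq:
  assumes "a \<in> Tn n" "x \<in> Tn n"
  shows "Hclass n a x = (if sandwich_stable n a x
    then {y \<in> Tn n. kerT n y = kerT n x \<and> ranT n y = ranT n x \<and> sandwich_stable n a y}
    else {x})"
proof -
  have self: "x \<in> Hclass n a x"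
    using Hclass_iff[OF assms] assms(2) by blast
  have nontrivial: "y \<in> Hclass n a x \<longleftrightarrow> y \<in> Tn n \<and> sandwich_stable n a x \<and>
      kerT n y = kerT n x \<and> ranT n y = ranT n x \<and> sandwich_stable n a y" if "y \<noteq> x" for y
    using Hclass_nontrivial_member[OF assms _ that] sandwich_stable_in_Hclass[OF assms]
      Hclass_iff[OF assms] by blast
  show ?thesis
  proof (rule set_eqI)
    fix y
    show "y \<in> Hclass n a x \<longleftrightarrow> y \<in> (if sandwich_stable n a x
        then {y \<in> Tn n. kerT n y = kerT n x \<and> ranT n y = ranT n x \<and> sandwich_stable n a y}
        else {x})"
      using self assms(2) nontrivial[of y] by (cases "y = x"; cases "sandwich_stable n a x") simp_all
  qed
qed

lemma kerT_eq_iff_classes_eq: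
  "kerT n y = kerT n x \<longleftrightarrow> (\<forall>j \<in> {1..n}. {i \<in> {1..n}. y i = y j} = {i \<in> {1..n}. x i = x j})"
proof
  assume eq: "kerT n y = kerT n x"
  show "\<forall>j \<in> {1..n}. {i \<in> {1..n}. y i = y j} = {i \<in> {1..n}. x i = x j}"
  proof
    fix j assume "j \<in> {1..n}"
    then have "i \<in> {1..n} \<and> y i = y j \<longleftrightarrow> i \<in> {1..n} \<and> x i = x j" for i
      using eq mem_kerT[of i j n y] mem_kerT[of i j n x] by blast
    then show "{i \<in> {1..n}. y i = y j} = {i \<in> {1..n}. x i = x j}"
      by (rule Collect_cong)
  qed
next
  assume blocks: "\<forall>j \<in> {1..n}. {i \<in> {1..n}. y i = y j} = {i \<in> {1..n}. x i = x j}"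
  show "kerT n y = kerT n x"
  proof (rule set_eqI)
    fix p :: "nat \<times> nat"
    obtain i j where p: "p = (i, j)"
      by fastforce
    have "y i = y j \<longleftrightarrow> x i = x j" if "i \<in> {1..n}" "j \<in> {1..n}"
      using blocks that by blast
    then show "p \<in> kerT n y \<longleftrightarrow> p \<in> kerT n x"
      unfolding p mem_kerT by blast
  qed
qed

lemma kerblocks_eq_iff: "kerblocks n y = kerblocks n x \<longleftrightarrow> kerT n y = kerT n x"
  unfolding kerT_eq_iff_classes_eq
proof
  assume blocks: "kerblocks n y = kerblocks n x"
  show "\<forall>j \<in> {1..n}. {i \<in> {1..n}. y i = y j} = {i \<in> {1..n}. x i = x j}"
  proof
    fix j assume j: "j \<in> {1..n}"
    then have "{i \<in> {1..n}. y i = y j} \<in> kerblocks n x"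
      unfolding blocks[symmetric] by (rule kerblockI)
    then obtain m where m: "{i \<in> {1..n}. y i = y j} = {i \<in> {1..n}. x i = x m}"
      by (rule kerblockE)
    with j have "x j = x m"
      by blast
    with m show "{i \<in> {1..n}. y i = y j} = {i \<in> {1..n}. x i = x j}"
      by simp
  qed
next
  assume "\<forall>j \<in> {1..n}. {i \<in> {1..n}. y i = y j} = {i \<in> {1..n}. x i = x j}"
  then show "kerblocks n y = kerblocks n x"
    unfolding kerblocks_eq_image by (intro image_cong) simp_all
qed

lemma kerT_comp_eq_iff_inj_on: "kerT n (g \<circ> f) = kerT n f \<longleftrightarrow> inj_on g (ranT n f)"
proof
  assume eq: "kerT n (g \<circ> f) = kerT n f"
  show "inj_on g (ranT n f)"
  proof (rule inj_onI)
    fix u v assume "u \<in> ranT n f" "v \<in> ranT n f" "g u = g v"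
    then obtain i j where "(i, j) \<in> kerT n (g \<circ> f)" "u = f i" "v = f j"
      by (auto simp: ranT_def kerT_def)
    with eq show "u = v"
      by (simp add: kerT_def)
  qed
next
  assume inj: "inj_on g (ranT n f)"
  have "kerT n (g \<circ> f) \<subseteq> kerT n f"
  proof
    fix p assume "p \<in> kerT n (g \<circ> f)"
    then obtain i j where "p = (i, j)" "i \<in> {1..n}" "j \<in> {1..n}" "g (f i) = g (f j)"
      by (auto simp: kerT_def)
    moreover from this have "f i = f j"
      using inj by (auto simp: ranT_def dest: inj_onD)
    ultimately show "p \<in> kerT n f"
      by (simp add: kerT_def)
  qed
  then show "kerT n (g \<circ> f) = kerT n f"
    using kerT_subset_kerT_comp by (rule subset_antisym)
qed

lemma inj_on_iff_card_kerblocks_le_1: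
  assumes "A \<subseteq> {1..n}"
  shows "inj_on g A \<longleftrightarrow> (\<forall>M \<in> kerblocks n g. card (A \<inter> M) \<le> 1)"
proof
  assume inj: "inj_on g A"
  show "\<forall>M \<in> kerblocks n g. card (A \<inter> M) \<le> 1"
  proof
    fix M assume "M \<in> kerblocks n g"
    then obtain j where M: "M = {i \<in> {1..n}. g i = g j}"
      by (rule kerblockE)
    have "inj_on g (A \<inter> M)"
      using inj by (rule inj_on_subset) blast
    moreover have "g ` (A \<inter> M) \<subseteq> {g j}"
      using M by blast
    ultimately show "card (A \<inter> M) \<le> 1"
      using card_inj_on_le[of g "A \<inter> M" "{g j}"] by simp
  qed
next
  assume card: "\<forall>M \<in> kerblocks n g. card (A \<inter> M) \<le> 1"
  show "inj_on g A"
  proof (rule inj_onI)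
    fix u v assume u: "u \<in> A" and v: "v \<in> A" and eq: "g u = g v"
    let ?M = "{i \<in> {1..n}. g i = g u}"
    have "?M \<in> kerblocks n g"
      using u assms by (intro kerblockI) blast
    with card have "card (A \<inter> ?M) \<le> Suc 0"
      by simp
    moreover have "finite (A \<inter> ?M)"
      by (rule finite_subset[of _ "{1..n}"]) auto
    moreover have "u \<in> A \<inter> ?M" "v \<in> A \<inter> ?M"
      using u v eq assms by auto
    ultimately show "u = v"
      using card_le_Suc0_iff_eq by blast
  qed
qed

lemma image_eq_ranT_iff_kerblocks_meet:
  assumes "A \<subseteq> {1..n}"
  shows "f ` A = ranT n f \<longleftrightarrow> (\<forall>B \<in> kerblocks n f. B \<inter> A \<noteq> {})"
proof
  assume ran: "f ` A = ranT n f"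
  show "\<forall>B \<in> kerblocks n f. B \<inter> A \<noteq> {}"
  proof
    fix B assume "B \<in> kerblocks n f"
    then obtain j where j: "j \<in> {1..n}" and B: "B = {i \<in> {1..n}. f i = f j}"
      by (rule kerblockE)
    have "f j \<in> f ` A"
      using ran j by (simp add: ranT_def)
    then obtain k where "k \<in> A" "f k = f j"
      by (metis imageE)
    with assms B show "B \<inter> A \<noteq> {}"
      by blast
  qed
next
  assume meet: "\<forall>B \<in> kerblocks n f. B \<inter> A \<noteq> {}"
  have "ranT n f \<subseteq> f ` A"
  proof
    fix w assume "w \<in> ranT n f"
    then obtain j where j: "j \<in> {1..n}" and w: "w = f j"
      by (auto simp: ranT_def)
    from j have "{i \<in> {1..n}. f i = f j} \<in> kerblocks n f"
      by (rule kerblockI)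
    with meet have "{i \<in> {1..n}. f i = f j} \<inter> A \<noteq> {}"
      by blast
    then obtain k where "k \<in> A" "f k = f j"
      by blast
    with w show "w \<in> f ` A"
      by (metis imageI)
  qed
  moreover have "f ` A \<subseteq> ranT n f"
    using assms by (auto simp: ranT_def)
  ultimately show "f ` A = ranT n f"
    by (rule subset_antisym[rotated])
qed

lemma sandwich_stable_iff:
  assumes "a \<in> Tn n" "x \<in> Tn n"
  shows "sandwich_stable n a x \<longleftrightarrow>
    (\<forall>M \<in> kerblocks n a. card (ranT n x \<inter> M) \<le> 1) \<and> (\<forall>B \<in> kerblocks n x. B \<inter> ranT n a \<noteq> {})"
  unfolding sandwich_stable_def kerT_comp_eq_iff_inj_on
  using inj_on_iff_card_kerblocks_le_1[OF ranT_subset[OF assms(2)]]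
    image_eq_ranT_iff_kerblocks_meet[OF ranT_subset[OF assms(1)]]
  by simp

lemma sandwich_stable_rankT_le:
  assumes "sandwich_stable n a x"
  shows "rankT n x \<le> rankT n a"
proof -
  have "rankT n x = card (x ` ranT n a)"
    using assms by (simp add: sandwich_stable_def rankT_def)
  also have "\<dots> \<le> card (ranT n a)"
    by (rule card_image_le) (simp add: ranT_def)
  finally show ?thesis
    by (simp add: rankT_def)
qed

theorem theorem6:
  fixes n :: nat and a x :: "nat \<Rightarrow> nat"
  assumes "n > 1" and "a \<in> Tn n" and "x \<in> Tn n"
  shows "Hclass n a x =
           (if rankT n x \<le> rankT n a \<and>
               (\<forall>M \<in> kerblocks n a. card (ranT n x \<inter> M) \<le> 1) \<and>
               (\<forall>B \<in> kerblocks n x. B \<inter> ranT n a \<noteq> {})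
            then {y \<in> Tn n. kerblocks n y = kerblocks n x \<and> ranT n y = ranT n x \<and>
                (\<forall>M \<in> kerblocks n a. card (ranT n y \<inter> M) \<le> 1) \<and>
                (\<forall>B \<in> kerblocks n y. B \<inter> ranT n a \<noteq> {})}
            else {x})"
proof -
  have stable_x: "rankT n x \<le> rankT n a \<and>
      (\<forall>M \<in> kerblocks n a. card (ranT n x \<inter> M) \<le> 1) \<and> (\<forall>B \<in> kerblocks n x. B \<inter> ranT n a \<noteq> {})
      \<longleftrightarrow> sandwich_stable n a x"
    using sandwich_stable_iff[OF assms(2,3)] sandwich_stable_rankT_le by blast
  have stable_y: "{y \<in> Tn n. kerblocks n y = kerblocks n x \<and> ranT n y = ranT n x \<and>
        (\<forall>M \<in> kerblocks n a. card (ranT n y \<inter> M) \<le> 1) \<and> (\<forall>B \<in> kerblocks n y. B \<inter> ranT n a \<noteq> {})} =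
      {y \<in> Tn n. kerT n y = kerT n x \<and> ranT n y = ranT n x \<and> sandwich_stable n a y}"
  proof (rule Collect_cong)
    fix y
    show "y \<in> Tn n \<and> kerblocks n y = kerblocks n x \<and> ranT n y = ranT n x \<and>
        (\<forall>M \<in> kerblocks n a. card (ranT n y \<inter> M) \<le> 1) \<and> (\<forall>B \<in> kerblocks n y. B \<inter> ranT n a \<noteq> {})
      \<longleftrightarrow> y \<in> Tn n \<and> kerT n y = kerT n x \<and> ranT n y = ranT n x \<and> sandwich_stable n a y"
      using sandwich_stable_iff[OF assms(2)] kerblocks_eq_iff[of n y x] by blast
  qed
  show ?thesis
    unfolding stable_x stable_y by (rule Hclass_eq[OF assms(2,3)])
qed

end
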